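(* Let $W$ be the Weyl group of a connected reductive group $G$ over $\mathbb{C}$ with respect to a maximal torus $T$, acting on $\mathfrak{t}^*$ by the dot action $w\bullet\lambda=w(\lambda+\rho)-\rho$. Let $\mu_0,\dots,\mu_m\in\mathfrak{t}^*$ and let $\mathfrak{z}_0,\dots,\mathfrak{z}_m\subseteq\mathfrak{t}^*$ be vector subspaces. If $(\mu_0+\mathfrak{z}_0)/(W,\bullet)\subseteq\bigcup_{i=1}^m(\mu_i+\mathfrak{z}_i)/(W,\bullet)$, then there exist $1\le i_0\le m$ and $w_0\in W$ such that $\mathfrak{z}_0\subseteq w_0(\mathfrak{z}_{i_0})$.
   Context: $\rho\in\mathfrak{t}^*$ satisfies $\rho(h_\alpha)=1$ for all simple roots $\alpha$. For $V\subseteq\mathfrak{t}^*$, $V/(W,\bullet)$ denotes the image of $V$ under the quotient map $\mathfrak{t}^*\to\mathfrak{t}^*/(W,\bullet)$. *)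

theory Defs
  imports "HOL-Analysis.Analysis"
begin

text \<open>Model: t* = X*(T) \<otimes> C identified with complex^'n (coordinates w.r.t. a Z-basis of
the character lattice X*(T)); t = X_*(T) \<otimes> C likewise identified with complex^'n via the
dual basis, so the natural pairing is the standard bilinear pairing below.
A connected reductive group over C is determined by its (reduced) root datum; its Weyl
group is the group generated by the root reflections.\<close>

type_synonym 'n tdual = "complex ^ 'n"

definition pair :: "complex ^ 'n \<Rightarrow> complex ^ 'n \<Rightarrow> complex" where
  "pair lam h = (\<Sum>i\<in>UNIV. lam $ i * h $ i)"

definition csubspace :: "(complex ^ 'n) set \<Rightarrow> bool" where
  "csubspace S \<longleftrightarrow> 0 \<in> S \<and> (\<forall>x\<in>S. \<forall>y\<in>S. x + y \<in> S) \<and> (\<forall>c. \<forall>x\<in>S. c *s x \<in> S)"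

definition is_lattice_vec :: "complex ^ 'n \<Rightarrow> bool" where
  "is_lattice_vec v \<longleftrightarrow> (\<forall>i. v $ i \<in> \<int>)"

definition refl :: "complex ^ 'n \<Rightarrow> complex ^ 'n \<Rightarrow> complex ^ 'n \<Rightarrow> complex ^ 'n" where
  "refl alpha halpha lam = lam - pair lam halpha *s alpha"

definition corefl :: "complex ^ 'n \<Rightarrow> complex ^ 'n \<Rightarrow> complex ^ 'n \<Rightarrow> complex ^ 'n" where
  "corefl alpha halpha h = h - pair alpha h *s halpha"

definition reduced_root_datum ::
  "(complex ^ 'n) set \<Rightarrow> (complex ^ 'n \<Rightarrow> complex ^ 'n) \<Rightarrow> bool" where
  "reduced_root_datum Phi cor \<longleftrightarrow>
     finite Phi \<and> 0 \<notin> Phi \<and>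
     (\<forall>a\<in>Phi. is_lattice_vec a \<and> is_lattice_vec (cor a)) \<and>
     (\<forall>a\<in>Phi. pair a (cor a) = 2) \<and>
     (\<forall>a\<in>Phi. \<forall>b\<in>Phi. refl a (cor a) b \<in> Phi) \<and>
     (\<forall>a\<in>Phi. \<forall>b\<in>Phi. cor (refl a (cor a) b) = corefl a (cor a) (cor b)) \<and>
     (\<forall>a\<in>Phi. \<forall>c::complex. c *s a \<in> Phi \<longrightarrow> c = 1 \<or> c = -1)"

inductive_set weyl_group ::
  "(complex ^ 'n) set \<Rightarrow> (complex ^ 'n \<Rightarrow> complex ^ 'n)
     \<Rightarrow> (complex ^ 'n \<Rightarrow> complex ^ 'n) set"
  for Phi cor where
  weyl_id: "id \<in> weyl_group Phi cor"
| weyl_step: "w \<in> weyl_group Phi cor \<Longrightarrow> a \<in> Phi \<Longrightarrow> refl a (cor a) \<circ> w \<in> weyl_group Phi cor"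

definition is_base :: "(complex ^ 'n) set \<Rightarrow> (complex ^ 'n) set \<Rightarrow> bool" where
  "is_base Phi Delta \<longleftrightarrow> Delta \<subseteq> Phi \<and> finite Delta \<and>
     (\<forall>c. (\<Sum>a\<in>Delta. c a *s a) = 0 \<longrightarrow> (\<forall>a\<in>Delta. c a = 0)) \<and>
     (\<forall>b\<in>Phi. \<exists>k::complex ^ 'n \<Rightarrow> nat.
        b = (\<Sum>a\<in>Delta. of_nat (k a) *s a) \<or> b = - (\<Sum>a\<in>Delta. of_nat (k a) *s a))"

definition dot :: "complex ^ 'n \<Rightarrow> (complex ^ 'n \<Rightarrow> complex ^ 'n) \<Rightarrow> complex ^ 'n \<Rightarrow> complex ^ 'n" where
  "dot rho w lam = w (lam + rho) - rho"

text \<open>Image of lam in t*/(W,dot): its dot-orbit.\<close>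
definition dot_orbit ::
  "(complex ^ 'n \<Rightarrow> complex ^ 'n) set \<Rightarrow> complex ^ 'n \<Rightarrow> complex ^ 'n \<Rightarrow> (complex ^ 'n) set" where
  "dot_orbit W rho lam = {dot rho w lam | w. w \<in> W}"

definition affine_shift :: "complex ^ 'n \<Rightarrow> (complex ^ 'n) set \<Rightarrow> (complex ^ 'n) set" where
  "affine_shift mu Z = (\<lambda>x. mu + x) ` Z"

end

theory Submission
  imports Defs
begin

text \<open>An orbit of the dot action of \<open>W\<close> on an affine subspace \<open>\<mu>\<^sub>i + \<zeta>\<^sub>i\<close> is the union of the
  affine subspaces \<open>w \<bullet> \<mu>\<^sub>i + w(\<zeta>\<^sub>i)\<close>, \<open>w \<in> W\<close>. Since \<open>W\<close> is countable, the hypothesis says that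
  the real affine subspace \<open>\<mu>\<^sub>0 + \<zeta>\<^sub>0\<close> is covered by countably many closed affine subspaces.
  If none of their directions contained \<open>\<zeta>\<^sub>0\<close>, each would meet \<open>\<mu>\<^sub>0 + \<zeta>\<^sub>0\<close> in a nowhere dense
  set, contradicting the Baire category theorem.\<close>

lemma translated_subspace_meets_line_once:
  fixes v :: "'a::real_vector"
  assumes D: "subspace D" and v: "v \<notin> D"
    and s: "x + s *\<^sub>R v \<in> (+) c ` D" and t: "x + t *\<^sub>R v \<in> (+) c ` D"
  shows "s = t"
proof (rule ccontr)
  assume "s \<noteq> t"
  from s t obtain u1 u2 where "u1 \<in> D" "u2 \<in> D"
    and "x + s *\<^sub>R v = c + u1" "x + t *\<^sub>R v = c + u2" by auto
  then have "(s - t) *\<^sub>R v \<in> D"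
    using subspace_diff[OF D] by (metis add_diff_cancel_left scaleR_diff_left)
  then have "inverse (s - t) *\<^sub>R (s - t) *\<^sub>R v \<in> D"
    using subspace_scale[OF D] by blast
  with \<open>s \<noteq> t\<close> v show False by simp
qed

lemma translated_subspace_diff_dense:
  fixes Z :: "'a::real_normed_vector set"
  assumes Z: "subspace Z" and D: "subspace D" and not_sub: "\<not> Z \<subseteq> D"
  shows "(+) p ` Z \<subseteq> closure ((+) p ` Z - (+) c ` D)"
proof
  fix x assume "x \<in> (+) p ` Z"
  then obtain z where z: "z \<in> Z" and xz: "x = p + z" by auto
  obtain v where vZ: "v \<in> Z" and vD: "v \<notin> D" using not_sub by auto
  have "norm v > 0" using vD subspace_0[OF D] by auto
  have on_line: "x + t *\<^sub>R v \<in> (+) p ` Z" for t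
    unfolding xz using subspace_add[OF Z z subspace_scale[OF Z vZ]]
    by (metis add.assoc image_eqI)
  show "x \<in> closure ((+) p ` Z - (+) c ` D)" unfolding closure_approachable
  proof (intro allI impI)
    fix e :: real assume "e > 0"
    define t where "t = e / (2 * norm v)"
    have "t > 0" "t * norm v < e"
      using \<open>e > 0\<close> \<open>norm v > 0\<close> by (simp_all add: t_def field_simps)
    then have close: "dist (x + t *\<^sub>R v) x < e" "dist (x + (t/2) *\<^sub>R v) x < e"
      using \<open>e > 0\<close> by (simp_all add: dist_norm)
    have "x + t *\<^sub>R v \<notin> (+) c ` D \<or> x + (t/2) *\<^sub>R v \<notin> (+) c ` D"
      using translated_subspace_meets_line_once[OF D vD] \<open>t > 0\<close> by force
    then show "\<exists>y \<in> (+) p ` Z - (+) c ` D. dist y x < e"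
      using on_line close by blast
  qed
qed

lemma countable_cover_by_translated_subspaces:
  fixes Z :: "'a::euclidean_space set" and D :: "'k \<Rightarrow> 'a set"
  assumes Z: "subspace Z" and K: "countable K" and D: "\<And>k. k \<in> K \<Longrightarrow> subspace (D k)"
    and cover: "(+) p ` Z \<subseteq> (\<Union>k\<in>K. (+) (c k) ` D k)"
  shows "\<exists>k\<in>K. Z \<subseteq> D k"
proof (rule ccontr)
  assume not_sub: "\<not> (\<exists>k\<in>K. Z \<subseteq> D k)"
  let ?A = "(+) p ` Z"
  have dense: "?A \<subseteq> closure (\<Inter>k\<in>K. ?A - (+) (c k) ` D k)"
  proof (rule Baire)
    show "closed ?A" using closed_translation[OF closed_subspace[OF Z]] by simp
    show "countable ((\<lambda>k. ?A - (+) (c k) ` D k) ` K)" using K by simp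
    fix T assume "T \<in> (\<lambda>k. ?A - (+) (c k) ` D k) ` K"
    then obtain k where k: "k \<in> K" and T: "T = ?A - (+) (c k) ` D k" by auto
    have "closed ((+) (c k) ` D k)"
      using closed_translation[OF closed_subspace[OF D[OF k]]] by simp
    then have "openin (top_of_set ?A) (?A \<inter> - (+) (c k) ` D k)"
      by (intro openin_open_Int) (simp add: open_Compl)
    moreover have "?A \<inter> - (+) (c k) ` D k = T" using T by blast
    moreover have "\<not> Z \<subseteq> D k" using not_sub k by blast
    then have "?A \<subseteq> closure T"
      unfolding T by (rule translated_subspace_diff_dense[OF Z D[OF k]])
    ultimately show "openin (top_of_set ?A) T \<and> ?A \<subseteq> closure T" by simp
  qed
  have p: "p \<in> ?A" using subspace_0[OF Z] by force
  with cover have "K \<noteq> {}" by blast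
  then have "(\<Inter>k\<in>K. ?A - (+) (c k) ` D k) = {}" using cover by auto
  with dense p show False by simp
qed

lemma scaleR_vec_eq_scalar_mult: "r *\<^sub>R (x :: complex ^ 'n) = complex_of_real r *s x"
  by (simp only: vec_eq_iff vector_scaleR_component vector_smult_component)
    (simp add: scaleR_conv_of_real)

lemma csubspace_imp_subspace: "csubspace S \<Longrightarrow> subspace S"
  unfolding csubspace_def subspace_def by (simp add: scaleR_vec_eq_scalar_mult)

lemma pair_add_left: "pair (x + y) h = pair x h + pair y h"
  unfolding pair_def by (simp add: distrib_right sum.distrib)

lemma pair_scalar_mult_left: "pair (c *s x) h = c * pair x h"
  unfolding pair_def by (simp add: sum_distrib_left mult.assoc)

lemma linear_refl: "linear (refl a h)"
  by (rule linearI)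
    (simp_all add: refl_def pair_add_left scaleR_vec_eq_scalar_mult pair_scalar_mult_left
      vec_eq_iff algebra_simps)

lemma weyl_group_linear: "w \<in> weyl_group Phi cor \<Longrightarrow> linear w"
  by (induction rule: weyl_group.induct) (metis linear_id, metis linear_compose linear_refl)

lemma countable_weyl_group:
  assumes "countable Phi"
  shows "countable (weyl_group Phi cor)"
proof -
  define word where "word l = foldr (\<lambda>a f. refl a (cor a) \<circ> f) l id" for l
  have "weyl_group Phi cor \<subseteq> word ` lists Phi"
  proof
    fix w assume "w \<in> weyl_group Phi cor"
    then show "w \<in> word ` lists Phi"
    proof (induction rule: weyl_group.induct)
      case weyl_id
      show ?case by (auto simp: word_def intro!: image_eqI[where x="[]"])
    next
      case (weyl_step w a)
      then obtain l where "l \<in> lists Phi" "w = word l" by auto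
      with weyl_step show ?case by (auto simp: word_def intro!: image_eqI[where x="a # l"])
    qed
  qed
  then show ?thesis using assms by (meson countable_image countable_lists countable_subset)
qed

lemma dot_translate:
  assumes "linear w"
  shows "dot rho w (mu + v) = dot rho w mu + w v"
  unfolding dot_def using linear_add[OF assms, of "mu + rho" v] by (simp add: algebra_simps)

lemma mem_dot_orbit_self: "id \<in> W \<Longrightarrow> lam \<in> dot_orbit W rho lam"
  unfolding dot_orbit_def dot_def by force

lemma dot_orbit_cover_imp_subspace_subset:
  fixes W :: "(complex ^ 'n \<Rightarrow> complex ^ 'n) set"
  assumes W: "countable W" "id \<in> W" "\<And>w. w \<in> W \<Longrightarrow> linear w"
    and I: "countable I" and Z: "subspace Z0" "\<And>i. i \<in> I \<Longrightarrow> subspace (Z i)"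
    and cover: "dot_orbit W rho ` affine_shift mu0 Z0
                  \<subseteq> (\<Union>i\<in>I. dot_orbit W rho ` affine_shift (mu i) (Z i))"
  shows "\<exists>i\<in>I. \<exists>w\<in>W. Z0 \<subseteq> w ` Z i"
proof -
  define c where "c = (\<lambda>(i, w). dot rho w (mu i))"
  define D where "D = (\<lambda>(i, w :: complex ^ 'n \<Rightarrow> complex ^ 'n). w ` Z i)"
  have covered: "(+) mu0 ` Z0 \<subseteq> (\<Union>k\<in>I \<times> W. (+) (c k) ` D k)"
  proof
    fix x assume "x \<in> (+) mu0 ` Z0"
    then have "dot_orbit W rho x \<in> dot_orbit W rho ` affine_shift mu0 Z0"
      by (simp add: affine_shift_def)
    with cover obtain i y where i: "i \<in> I" and y: "y \<in> affine_shift (mu i) (Z i)"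
      and same_orbit: "dot_orbit W rho x = dot_orbit W rho y" by blast
    obtain v where v: "v \<in> Z i" and yv: "y = mu i + v"
      using y unfolding affine_shift_def by auto
    have "x \<in> dot_orbit W rho y" using mem_dot_orbit_self[OF W(2)] same_orbit by metis
    then obtain w where w: "w \<in> W" and "x = dot rho w y" unfolding dot_orbit_def by auto
    then have "x = c (i, w) + w v" using dot_translate[OF W(3)] yv by (simp add: c_def)
    moreover have "w v \<in> D (i, w)" using v by (simp add: D_def)
    ultimately show "x \<in> (\<Union>k\<in>I \<times> W. (+) (c k) ` D k)" using i w by blast
  qed
  have "subspace (D k)" if "k \<in> I \<times> W" for k
    using that Z(2) W(3) linear_subspace_image by (auto simp: D_def)
  moreover have "countable (I \<times> W)" using I W(1) by simp
  ultimately have "\<exists>k\<in>I \<times> W. Z0 \<subseteq> D k"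
    using countable_cover_by_translated_subspaces[OF Z(1) _ _ covered] by blast
  then show ?thesis by (auto simp: D_def)
qed

theorem lemma5p3:
  fixes Phi :: "(complex ^ 'n) set" and cor :: "complex ^ 'n \<Rightarrow> complex ^ 'n"
    and Delta :: "(complex ^ 'n) set" and rho :: "complex ^ 'n"
    and m :: nat and mu :: "nat \<Rightarrow> complex ^ 'n" and z :: "nat \<Rightarrow> (complex ^ 'n) set"
  assumes datum: "reduced_root_datum Phi cor"
    and base: "is_base Phi Delta"
    and rho: "\<forall>a\<in>Delta. pair rho (cor a) = 1"
    and subsp: "\<forall>i\<le>m. csubspace (z i)"
    and cover: "dot_orbit (weyl_group Phi cor) rho ` affine_shift (mu 0) (z 0)
                  \<subseteq> (\<Union>i\<in>{1..m}. dot_orbit (weyl_group Phi cor) rho ` affine_shift (mu i) (z i))"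
  shows "\<exists>i0\<in>{1..m}. \<exists>w0\<in>weyl_group Phi cor. z 0 \<subseteq> w0 ` z i0"
proof (rule dot_orbit_cover_imp_subspace_subset[OF _ _ _ _ _ _ cover])
  show "countable (weyl_group Phi cor)"
    using datum by (simp add: reduced_root_datum_def countable_finite countable_weyl_group)
  show "id \<in> weyl_group Phi cor" by (rule weyl_id)
  show "linear w" if "w \<in> weyl_group Phi cor" for w
    using that by (rule weyl_group_linear)
  show "countable {1..m}" by simp
  show "subspace (z 0)" using subsp by (simp add: csubspace_imp_subspace)
  show "subspace (z i)" if "i \<in> {1..m}" for i
    using that subsp by (simp add: csubspace_imp_subspace)
qed

end
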